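(* Let $B$ be a simple soluble skew left brace. Then $B$ is an abelian brace and $(B,+)=(B,\cdot)$ is a cyclic group of prime order.
   Context: A skew left brace (brace) is a set $B$ with two group structures $(B,+)$ and $(B,\cdot)$ with $a(b+c)=ab-a+ac$; $\lambda_a(b)=-a+ab$. An ideal is a subset that is a normal subgroup of both groups and $\lambda_b$-invariant for all $b$. $B$ is simple if $B\neq0$ and its only ideals are $0$ and $B$. For ideals $I,J$, $[I,J]$ is the smallest ideal containing $[I,J]_+$, $[I,J]_\cdot$ and all $ij-(i+j)$; $B$ is abelian if $[B,B]=0$ (i.e. $ab=a+b=b+a$ for all $a,b$). $B$ is soluble if there is a chain $B=I_0\supseteq\cdots\supseteq I_n=0$ with each $I_i$ an ideal of the brace $I_{i-1}$ and $I_{i-1}/I_i$ abelian. *)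

theory Defs
  imports "HOL-Algebra.Algebra" "HOL-Computational_Algebra.Primes"
begin

text \<open>A skew left brace is given by two group structures A (the additive group (B,+),
  written with the HOL-Algebra multiplicative record notation) and M (the multiplicative
  group (B,.)) on the same carrier, satisfying a(b+c) = ab - a + ac.\<close>

definition skew_brace :: "('a, 'b) monoid_scheme \<Rightarrow> ('a, 'c) monoid_scheme \<Rightarrow> bool" where
  "skew_brace A M \<longleftrightarrow> group A \<and> group M \<and> carrier A = carrier M \<and>
     (\<forall>a\<in>carrier A. \<forall>b\<in>carrier A. \<forall>c\<in>carrier A.
        a \<otimes>\<^bsub>M\<^esub> (b \<otimes>\<^bsub>A\<^esub> c)
          = ((a \<otimes>\<^bsub>M\<^esub> b) \<otimes>\<^bsub>A\<^esub> inv\<^bsub>A\<^esub> a) \<otimes>\<^bsub>A\<^esub> (a \<otimes>\<^bsub>M\<^esub> c))"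

definition brace_lambda :: "('a, 'b) monoid_scheme \<Rightarrow> ('a, 'c) monoid_scheme \<Rightarrow> 'a \<Rightarrow> 'a \<Rightarrow> 'a" where
  "brace_lambda A M a b = inv\<^bsub>A\<^esub> a \<otimes>\<^bsub>A\<^esub> (a \<otimes>\<^bsub>M\<^esub> b)"

definition brace_ideal :: "('a, 'b) monoid_scheme \<Rightarrow> ('a, 'c) monoid_scheme \<Rightarrow> 'a set \<Rightarrow> bool" where
  "brace_ideal A M I \<longleftrightarrow> normal I A \<and> normal I M \<and>
     (\<forall>b\<in>carrier A. \<forall>x\<in>I. brace_lambda A M b x \<in> I)"

definition brace_trivial :: "('a, 'b) monoid_scheme \<Rightarrow> bool" where
  "brace_trivial A \<longleftrightarrow> carrier A = {\<one>\<^bsub>A\<^esub>}"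

definition simple_brace :: "('a, 'b) monoid_scheme \<Rightarrow> ('a, 'c) monoid_scheme \<Rightarrow> bool" where
  "simple_brace A M \<longleftrightarrow> skew_brace A M \<and> \<not> brace_trivial A \<and>
     (\<forall>I. brace_ideal A M I \<longrightarrow> I = {\<one>\<^bsub>A\<^esub>} \<or> I = carrier A)"

definition abelian_brace :: "('a, 'b) monoid_scheme \<Rightarrow> ('a, 'c) monoid_scheme \<Rightarrow> bool" where
  "abelian_brace A M \<longleftrightarrow> (\<forall>a\<in>carrier A. \<forall>b\<in>carrier A.
     a \<otimes>\<^bsub>M\<^esub> b = a \<otimes>\<^bsub>A\<^esub> b \<and> a \<otimes>\<^bsub>A\<^esub> b = b \<otimes>\<^bsub>A\<^esub> a)"

definition soluble_brace :: "('a, 'b) monoid_scheme \<Rightarrow> ('a, 'c) monoid_scheme \<Rightarrow> bool" where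
  "soluble_brace A M \<longleftrightarrow> skew_brace A M \<and>
     (\<exists>(I :: nat \<Rightarrow> 'a set) n. I 0 = carrier A \<and> I n = {\<one>\<^bsub>A\<^esub>} \<and>
        (\<forall>i\<in>{1..n}.
           I i \<subseteq> I (i - 1) \<and>
           brace_ideal (A\<lparr>carrier := I (i - 1)\<rparr>) (M\<lparr>carrier := I (i - 1)\<rparr>) (I i) \<and>
           abelian_brace ((A\<lparr>carrier := I (i - 1)\<rparr>) Mod (I i))
                         ((M\<lparr>carrier := I (i - 1)\<rparr>) Mod (I i))))"

end

theory Submission imports Defs begin

text \<open>In the solubility chain, the first term that is not all of B is a proper ideal of B with
  abelian quotient; simplicity forces it to be zero, so B itself is abelian. In an abelian brace
  the two operations coincide and commute, so every subgroup of the additive group is an ideal.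
  Simplicity then says that the additive group has no proper nontrivial subgroups, and such a
  group is cyclic of prime order.\<close>

lemma (in group) generate_eq_carrier_if_no_proper_subgroups:
  assumes no_proper: "\<And>H. subgroup H G \<Longrightarrow> H = {\<one>} \<or> H = carrier G"
    and a: "a \<in> carrier G" "a \<noteq> \<one>"
  shows "generate G {a} = carrier G"
proof -
  have "a \<in> generate G {a}" by (rule generate.incl) simp
  then show ?thesis using no_proper[OF generate_is_subgroup[of "{a}"]] a by auto
qed

lemma (in group) ord_ne_0_if_no_proper_subgroups:
  assumes no_proper: "\<And>H. subgroup H G \<Longrightarrow> H = {\<one>} \<or> H = carrier G"
    and a: "a \<in> carrier G"
  shows "ord a \<noteq> 0"
proof (cases "a [^] (2::nat) = \<one>")
  case True
  then show ?thesis using ord_eq_0[OF a] by force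
next
  case False
  \<comment> \<open>An element of infinite order is not a power of its square.\<close>
  have sq: "a [^] (2::nat) \<in> carrier G" using a by simp
  have "a \<in> generate G {a [^] (2::nat)}"
    using generate_eq_carrier_if_no_proper_subgroups[OF no_proper sq False] a by simp
  then obtain k :: int where "a = (a [^] (2::nat)) [^] k"
    using generate_pow[OF sq] by auto
  then have "a [^] (1::int) = a [^] (2 * k)"
    using a by (simp add: int_pow_pow flip: int_pow_int)
  then have "int (ord a) dvd 2 * k - 1" using int_pow_eq[OF a] by simp
  moreover have "\<not> (0::int) dvd 2 * k - 1" by simp presburger
  ultimately show ?thesis by (metis of_nat_0)
qed

lemma (in group) no_proper_subgroups_imp_cyclic_prime:
  assumes no_proper: "\<And>H. subgroup H G \<Longrightarrow> H = {\<one>} \<or> H = carrier G"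
    and nontrivial: "carrier G \<noteq> {\<one>}"
  shows "cyclic_group G \<and> Factorial_Ring.prime (card (carrier G))"
proof -
  obtain a where a: "a \<in> carrier G" "a \<noteq> \<one>" using nontrivial one_closed by blast
  have gen: "generate G {a} = carrier G"
    using generate_eq_carrier_if_no_proper_subgroups[OF no_proper a] .
  have "subgroup_generated G {a} = G"
    using gen a unfolding subgroup_generated_def by simp
  then have cyclic: "cyclic_group G" unfolding cyclic_group_def using a by blast
  have ord_ne_0: "ord a \<noteq> 0" using ord_ne_0_if_no_proper_subgroups[OF no_proper a(1)] .
  have card_eq: "card (carrier G) = ord a" using generate_pow_card[OF a(1)] gen by simp
  have "card (carrier G) \<noteq> 1" using nontrivial one_closed by (metis card_1_singletonE singletonD)
  then have "1 < ord a" using card_eq ord_ne_0 by linarith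
  moreover have "d = 1 \<or> d = ord a" if d: "d dvd ord a" for d
  proof -
    have ad: "a [^] d \<in> carrier G" using a by simp
    have "ord (a [^] d) = ord a div d"
      using ord_pow_gen[OF a(1), of d] d ord_ne_0 by (auto simp: gcd_nat.absorb1)
    then have "card (generate G {a [^] d}) = ord a div d" using generate_pow_card[OF ad] by simp
    moreover have "generate G {a [^] d} = {\<one>} \<or> generate G {a [^] d} = carrier G"
      using no_proper[OF generate_is_subgroup[of "{a [^] d}"]] ad by simp
    ultimately have "ord a div d = 1 \<or> ord a div d = ord a" using card_eq by auto
    then show ?thesis using d ord_ne_0 by auto
  qed
  ultimately have "Factorial_Ring.prime (ord a)" unfolding prime_nat_iff by blast
  with cyclic card_eq show ?thesis by simp
qed

lemma skew_brace_one_eq: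
  assumes "skew_brace A M"
  shows "\<one>\<^bsub>M\<^esub> = \<one>\<^bsub>A\<^esub>"
proof -
  interpret A: group A using assms unfolding skew_brace_def by blast
  interpret M: group M using assms unfolding skew_brace_def by blast
  have carrier_eq: "carrier A = carrier M" using assms unfolding skew_brace_def by blast
  define e where "e = \<one>\<^bsub>M\<^esub>"
  have e: "e \<in> carrier A" using carrier_eq e_def by simp
  define x where "x = e \<otimes>\<^bsub>M\<^esub> \<one>\<^bsub>A\<^esub>"
  have x: "x \<in> carrier A" using e carrier_eq x_def by (metis A.one_closed M.m_closed)
  \<comment> \<open>The brace identity at (e, 0, 0) gives x = x - e + x.\<close>
  have "x = (x \<otimes>\<^bsub>A\<^esub> inv\<^bsub>A\<^esub> e) \<otimes>\<^bsub>A\<^esub> x"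
    using assms e unfolding skew_brace_def x_def by (metis A.one_closed A.r_one)
  then have "x \<otimes>\<^bsub>A\<^esub> \<one>\<^bsub>A\<^esub> = x \<otimes>\<^bsub>A\<^esub> (inv\<^bsub>A\<^esub> e \<otimes>\<^bsub>A\<^esub> x)"
    using x e by (simp add: A.m_assoc)
  then have "\<one>\<^bsub>A\<^esub> = inv\<^bsub>A\<^esub> e \<otimes>\<^bsub>A\<^esub> x"
    using x e A.l_cancel by (metis A.inv_closed A.m_closed A.one_closed)
  then have "x = e" using x e by (metis A.inv_equality A.inv_inv A.inv_closed)
  moreover have "x = \<one>\<^bsub>A\<^esub>" using x_def e_def carrier_eq by (metis A.one_closed M.l_one)
  ultimately show ?thesis using e_def by simp
qed

lemma soluble_brace_ex_proper_ideal_abelian_quotient: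
  assumes "soluble_brace A M" and "carrier A \<noteq> {\<one>\<^bsub>A\<^esub>}"
  obtains J where "J \<noteq> carrier A" "brace_ideal A M J" "abelian_brace (A Mod J) (M Mod J)"
proof -
  have carrier_eq: "carrier M = carrier A"
    using assms(1) unfolding soluble_brace_def skew_brace_def by simp
  obtain I :: "nat \<Rightarrow> 'a set" and n where I0: "I 0 = carrier A" and In: "I n = {\<one>\<^bsub>A\<^esub>}"
    and step: "\<And>i. i \<in> {1..n} \<Longrightarrow>
           brace_ideal (A\<lparr>carrier := I (i - 1)\<rparr>) (M\<lparr>carrier := I (i - 1)\<rparr>) (I i) \<and>
           abelian_brace ((A\<lparr>carrier := I (i - 1)\<rparr>) Mod (I i))
                         ((M\<lparr>carrier := I (i - 1)\<rparr>) Mod (I i))"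
    using assms(1) unfolding soluble_brace_def by blast
  define i where "i = (LEAST i. I i \<noteq> carrier A)"
  have ex: "I n \<noteq> carrier A" using In assms(2) by simp
  have Ii: "I i \<noteq> carrier A" using LeastI[of "\<lambda>i. I i \<noteq> carrier A", OF ex] i_def by simp
  then have "i \<noteq> 0" using I0 by auto
  moreover have "i \<le> n" using Least_le[of "\<lambda>i. I i \<noteq> carrier A", OF ex] i_def by simp
  ultimately have i: "i \<in> {1..n}" by simp
  have "I (i - 1) = carrier A"
    using not_less_Least[of "i - 1" "\<lambda>i. I i \<noteq> carrier A"] i_def \<open>i \<noteq> 0\<close> by fastforce
  then have "A\<lparr>carrier := I (i - 1)\<rparr> = A" "M\<lparr>carrier := I (i - 1)\<rparr> = M"
    using carrier_eq by simp_all
  then show ?thesis using that[OF Ii] step[OF i] by simp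
qed

lemma abelian_brace_of_abelian_Mod_trivial:
  assumes "monoid A" and "abelian_brace (A Mod {\<one>\<^bsub>A\<^esub>}) (M Mod {\<one>\<^bsub>A\<^esub>})"
  shows "abelian_brace A M"
  unfolding abelian_brace_def
proof (intro ballI)
  fix a b assume a: "a \<in> carrier A" and b: "b \<in> carrier A"
  have "{x} \<in> carrier (A Mod {\<one>\<^bsub>A\<^esub>})" if "x \<in> carrier A" for x
    using that monoid.l_one[OF assms(1)]
    unfolding FactGroup_def RCOSETS_def r_coset_def by force
  then have "{a} \<otimes>\<^bsub>M Mod {\<one>\<^bsub>A\<^esub>}\<^esub> {b} = {a} \<otimes>\<^bsub>A Mod {\<one>\<^bsub>A\<^esub>}\<^esub> {b}
       \<and> {a} \<otimes>\<^bsub>A Mod {\<one>\<^bsub>A\<^esub>}\<^esub> {b} = {b} \<otimes>\<^bsub>A Mod {\<one>\<^bsub>A\<^esub>}\<^esub> {a}"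
    using assms(2) a b unfolding abelian_brace_def by blast
  then show "a \<otimes>\<^bsub>M\<^esub> b = a \<otimes>\<^bsub>A\<^esub> b \<and> a \<otimes>\<^bsub>A\<^esub> b = b \<otimes>\<^bsub>A\<^esub> a"
    unfolding FactGroup_def set_mult_def by simp
qed

lemma simple_soluble_brace_imp_abelian:
  assumes "simple_brace A M" and "soluble_brace A M"
  shows "abelian_brace A M"
proof -
  have brace: "skew_brace A M" and nontrivial: "carrier A \<noteq> {\<one>\<^bsub>A\<^esub>}"
    using assms(1) unfolding simple_brace_def brace_trivial_def by blast+
  obtain J where "J \<noteq> carrier A" "brace_ideal A M J" "abelian_brace (A Mod J) (M Mod J)"
    using soluble_brace_ex_proper_ideal_abelian_quotient[OF assms(2) nontrivial] .
  moreover have "monoid A" using brace unfolding skew_brace_def by (simp add: group.is_monoid)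
  ultimately show ?thesis
    using assms(1) abelian_brace_of_abelian_Mod_trivial unfolding simple_brace_def by blast
qed

lemma abelian_brace_inv_eq:
  assumes "skew_brace A M" "abelian_brace A M" "a \<in> carrier A"
  shows "inv\<^bsub>M\<^esub> a = inv\<^bsub>A\<^esub> a"
proof -
  interpret A: group A using assms(1) unfolding skew_brace_def by blast
  interpret M: group M using assms(1) unfolding skew_brace_def by blast
  have carrier_eq: "carrier M = carrier A" using assms(1) unfolding skew_brace_def by simp
  have "a \<otimes>\<^bsub>M\<^esub> inv\<^bsub>A\<^esub> a = \<one>\<^bsub>M\<^esub>"
    using assms skew_brace_one_eq[OF assms(1)] unfolding abelian_brace_def by simp
  then show ?thesis using assms(3) carrier_eq by (metis A.inv_closed M.inv_equality M.inv_inv M.inv_closed)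
qed

lemma abelian_brace_subgroup_imp_ideal:
  assumes brace: "skew_brace A M" and abelian: "abelian_brace A M" and H: "subgroup H A"
  shows "brace_ideal A M H"
proof -
  interpret A: group A using brace unfolding skew_brace_def by blast
  interpret M: group M using brace unfolding skew_brace_def by blast
  have carrier_eq: "carrier M = carrier A" using brace unfolding skew_brace_def by simp
  have mult_eq: "\<And>a b. a \<in> carrier A \<Longrightarrow> b \<in> carrier A \<Longrightarrow> a \<otimes>\<^bsub>M\<^esub> b = a \<otimes>\<^bsub>A\<^esub> b"
    and comm: "\<And>a b. a \<in> carrier A \<Longrightarrow> b \<in> carrier A \<Longrightarrow> a \<otimes>\<^bsub>A\<^esub> b = b \<otimes>\<^bsub>A\<^esub> a"
    using abelian unfolding abelian_brace_def by blast+
  have HA: "H \<subseteq> carrier A" using H subgroup.subset by blast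
  have "comm_group A" by (rule A.group_comm_groupI) (use comm in auto)
  then have normal_A: "normal H A" using H comm_group.subgroup_imp_normal by blast
  have "comm_group M"
    by (rule M.group_comm_groupI) (use comm mult_eq carrier_eq in auto)
  moreover have "subgroup H M"
  proof
    show "H \<subseteq> carrier M" using HA carrier_eq by simp
    show "x \<otimes>\<^bsub>M\<^esub> y \<in> H" if "x \<in> H" "y \<in> H" for x y
      using that HA mult_eq subgroup.m_closed[OF H] by (metis subsetD)
    show "\<one>\<^bsub>M\<^esub> \<in> H" using skew_brace_one_eq[OF brace] subgroup.one_closed[OF H] by simp
    show "inv\<^bsub>M\<^esub> x \<in> H" if "x \<in> H" for x
      using that HA abelian_brace_inv_eq[OF brace abelian] subgroup.m_inv_closed[OF H]
      by (metis subsetD)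
  qed
  ultimately have normal_M: "normal H M" using comm_group.subgroup_imp_normal by blast
  have "brace_lambda A M b x = x" if "b \<in> carrier A" "x \<in> H" for b x
    using that HA unfolding brace_lambda_def
    by (simp add: mult_eq subsetD A.m_assoc[symmetric])
  then show ?thesis using normal_A normal_M unfolding brace_ideal_def by simp
qed

theorem corollary4p5:
  fixes A :: "'a monoid" and M :: "'a monoid"
  assumes "simple_brace A M" and "soluble_brace A M"
  shows "abelian_brace A M \<and> (\<forall>a\<in>carrier A. \<forall>b\<in>carrier A. a \<otimes>\<^bsub>M\<^esub> b = a \<otimes>\<^bsub>A\<^esub> b)
         \<and> cyclic_group A \<and> Factorial_Ring.prime (card (carrier A))"
proof -
  have brace: "skew_brace A M" and nontrivial: "carrier A \<noteq> {\<one>\<^bsub>A\<^esub>}"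
    and simple: "\<And>I. brace_ideal A M I \<Longrightarrow> I = {\<one>\<^bsub>A\<^esub>} \<or> I = carrier A"
    using assms(1) unfolding simple_brace_def brace_trivial_def by blast+
  have abelian: "abelian_brace A M" using simple_soluble_brace_imp_abelian[OF assms] .
  have "group A" using brace unfolding skew_brace_def by blast
  then have "cyclic_group A \<and> Factorial_Ring.prime (card (carrier A))"
    using simple abelian_brace_subgroup_imp_ideal[OF brace abelian] nontrivial
    by (intro group.no_proper_subgroups_imp_cyclic_prime) auto
  then show ?thesis using abelian unfolding abelian_brace_def by blast
qed

end
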